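(* Let $\tilde{\mathcal E}\ge0$ be a hermitian operator on $\mathbb C^\Lambda$ whose off-diagonal matrix elements are negative. For $h$ real, let $\mathcal Q_4(h)$ be the block matrix indexed by $j,j'\in\{0,\dots,n_\tau\}$ with $$\mathcal Q_4(h)_{j,j'}=\delta_{j,j'}\big(\mathbf 1+\epsilon\tilde{\mathcal E}-i\sqrt\epsilon\,h_j\big)-\delta_{j+1,j'}\mathbf 1 .$$ Then $\mathcal C_4(h)=\mathcal Q_4(h)^{-1}$ satisfies, for all real $h$ and all $j,j',x,x'$, $$\big|\mathcal C_4(h)_{(j,x),(j',x')}\big|\le\mathcal C_4(0)_{(j,x),(j',x')},$$ and the right hand side is bounded uniformly in $n_\tau$ (and in $j,j',x,x'$).
   Context: $\Lambda$ is a finite discrete torus $\mathbb Z^d/L\mathbb Z^d$ (spacing $1$); operators on $\mathbb C^\Lambda$ are identified with their matrices and functions on $\Lambda$ (in particular $h_j\in\mathbb R^\Lambda$) act as multiplication operators. $\beta>0$ is fixed, $n_\tau\in\mathbb N$, $\epsilon=\beta/n_\tau$, $h=(h_j)_{j=1}^{n_\tau}$ with $h_j\in\mathbb R^\Lambda$ and the convention $h_0=0$. Matrix elements $\mathcal C_4(h)_{(j,x),(j',x')}$ refer to the standard basis of $(\mathbb C^\Lambda)^{n_\tau+1}$. *)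

theory Defs
  imports "HOL-Analysis.Analysis"
begin

text \<open>The discrete torus \<open>\<Lambda> = \<int>^d / L\<int>^d\<close>, represented by the canonical
  representatives \<open>x = (x_0,\<dots>,x_{d-1})\<close> with \<open>0 \<le> x_i < L\<close>
  (coordinates \<open>i \<ge> d\<close> are fixed to 0).\<close>
definition torus :: "nat \<Rightarrow> int \<Rightarrow> (nat \<Rightarrow> int) set" where
  "torus d L = {x. (\<forall>i<d. 0 \<le> x i \<and> x i < L) \<and> (\<forall>i\<ge>d. x i = 0)}"

type_synonym site = "nat \<Rightarrow> int"

definition hermitian_on :: "site set \<Rightarrow> (site \<Rightarrow> site \<Rightarrow> complex) \<Rightarrow> bool" where
  "hermitian_on \<Lambda> E \<longleftrightarrow> (\<forall>x\<in>\<Lambda>. \<forall>y\<in>\<Lambda>. E x y = cnj (E y x))"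

definition pos_semidef_on :: "site set \<Rightarrow> (site \<Rightarrow> site \<Rightarrow> complex) \<Rightarrow> bool" where
  "pos_semidef_on \<Lambda> E \<longleftrightarrow>
     (\<forall>v :: site \<Rightarrow> complex. 0 \<le> Re (\<Sum>x\<in>\<Lambda>. \<Sum>y\<in>\<Lambda>. cnj (v x) * E x y * v y))"

definition idx :: "nat \<Rightarrow> site set \<Rightarrow> (nat \<times> site) set" where
  "idx n \<Lambda> = {0..n} \<times> \<Lambda>"

definition is_inverse_on :: "'i set \<Rightarrow> ('i \<Rightarrow> 'i \<Rightarrow> complex) \<Rightarrow> ('i \<Rightarrow> 'i \<Rightarrow> complex) \<Rightarrow> bool" where
  "is_inverse_on I A B \<longleftrightarrow>
     (\<forall>a\<in>I. \<forall>c\<in>I. (\<Sum>b\<in>I. A a b * B b c) = (if a = c then 1 else 0)) \<and>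
     (\<forall>a\<in>I. \<forall>c\<in>I. (\<Sum>b\<in>I. B a b * A b c) = (if a = c then 1 else 0))"

definition inverse_on :: "'i set \<Rightarrow> ('i \<Rightarrow> 'i \<Rightarrow> complex) \<Rightarrow> ('i \<Rightarrow> 'i \<Rightarrow> complex)" where
  "inverse_on I A = (SOME B. is_inverse_on I A B)"

text \<open>\<open>\<Q>\<^sub>4(h)\<close> with \<open>\<epsilon> = \<beta>/n\<^sub>\<tau>\<close>, block indices \<open>j,j' \<in> {0..n\<^sub>\<tau>}\<close>,
  and the convention \<open>h\<^sub>0 = 0\<close> (the value \<open>h 0\<close> is ignored).\<close>
definition Q4 :: "real \<Rightarrow> nat \<Rightarrow> (site \<Rightarrow> site \<Rightarrow> complex) \<Rightarrow> (nat \<Rightarrow> site \<Rightarrow> real)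
                    \<Rightarrow> nat \<times> site \<Rightarrow> nat \<times> site \<Rightarrow> complex" where
  "Q4 \<beta> n E h = (\<lambda>(j, x) (j', x').
     let \<epsilon> = \<beta> / real n;
         hj = (if j = 0 then 0 else h j x)
     in (if j = j' then (if x = x' then 1 else 0) + complex_of_real \<epsilon> * E x x'
                         - \<i> * complex_of_real (sqrt \<epsilon> * hj) * (if x = x' then 1 else 0)
         else 0)
        - (if j + 1 = j' \<and> x = x' then 1 else 0))"

definition C4 :: "real \<Rightarrow> nat \<Rightarrow> site set \<Rightarrow> (site \<Rightarrow> site \<Rightarrow> complex) \<Rightarrow> (nat \<Rightarrow> site \<Rightarrow> real)
                    \<Rightarrow> nat \<times> site \<Rightarrow> nat \<times> site \<Rightarrow> complex" where
  "C4 \<beta> n \<Lambda> E h = inverse_on (idx n \<Lambda>) (Q4 \<beta> n E h)"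

end

theory Submission
  imports Defs "Jordan_Normal_Form.Determinant"
begin

text \<open>Write \<open>R\<close> for \<open>\<Q>\<^sub>4(0)\<close>. As \<open>\<E>\<close> is real with nonpositive off-diagonal entries, \<open>R\<close> is a
  real matrix lying entrywise below the comparison matrix of every \<open>\<Q>\<^sub>4(h)\<close>: the term
  \<open>-i\<surd>\<epsilon> h\<^sub>j\<close> only increases the moduli of the diagonal entries. \<open>R\<close> is monotone (\<open>R w \<ge> 0\<close>
  implies \<open>w \<ge> 0\<close>): its diagonal block \<open>M = 1 + \<epsilon>\<E>\<close> is a Z-matrix dominating the identity as a
  quadratic form, and the block-bidiagonal structure is handled by backward induction over the time
  slices. Monotonicity of \<open>R\<close> yields the invertibility of \<open>\<Q>\<^sub>4(h)\<close>, the reality of \<open>\<C>\<^sub>4(0) = R\<^sup>-\<^sup>1\<close>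
  and the entrywise bound \<open>\<bar>\<Q>\<^sub>4(h)\<^sup>-\<^sup>1\<bar> \<le> R\<^sup>-\<^sup>1\<close>. Finally, the columns of \<open>R\<^sup>-\<^sup>1\<close> are built from
  powers of \<open>M\<^sup>-\<^sup>1\<close> applied to unit vectors, and \<open>M\<^sup>-\<^sup>1\<close> is an \<open>\<ell>\<^sup>2\<close>-contraction, so every entry of
  \<open>\<C>\<^sub>4(0)\<close> is at most \<open>1\<close>, uniformly in \<open>n\<^sub>\<tau>\<close>.\<close>

unbundle no vec_syntax

lemma is_inverse_on_reindex:
  assumes f: "bij_betw f J I"
  shows "is_inverse_on I A B \<longleftrightarrow>
         is_inverse_on J (\<lambda>i k. A (f i) (f k)) (\<lambda>i k. B (f i) (f k))"
proof -
  have sum_I: "(\<Sum>b\<in>I. F b) = (\<Sum>l\<in>J. F (f l))" for F :: "_ \<Rightarrow> complex"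
    by (rule sum.reindex_bij_betw[OF f, symmetric])
  have ball_I: "(\<forall>a\<in>I. P a) \<longleftrightarrow> (\<forall>i\<in>J. P (f i))" for P
    using f by (auto simp: bij_betw_def)
  have "f i = f k \<longleftrightarrow> i = k" if "i \<in> J" "k \<in> J" for i k
    using f that by (auto simp: bij_betw_def inj_on_def)
  then show ?thesis
    unfolding is_inverse_on_def sum_I ball_I by (auto cong: if_cong)
qed

lemma is_inverse_on_atLeastLessThan_if_injective:
  fixes A :: "nat \<Rightarrow> nat \<Rightarrow> complex"
  assumes inj: "\<And>v. \<forall>i\<in>{0..<N}. (\<Sum>k\<in>{0..<N}. A i k * v k) = 0 \<Longrightarrow> \<forall>i\<in>{0..<N}. v i = 0"
  shows "\<exists>B. is_inverse_on {0..<N} A B"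
proof -
  define Am where "Am = mat N N (\<lambda>(i, k). A i k)"
  have Am: "Am \<in> carrier_mat N N" by (simp add: Am_def)
  have "det Am \<noteq> 0"
  proof
    assume "det Am = 0"
    then obtain v where v: "v \<in> carrier_vec N" "v \<noteq> 0\<^sub>v N" "Am *\<^sub>v v = 0\<^sub>v N"
      using det_0_iff_vec_prod_zero_field[OF Am] by blast
    have "(\<Sum>k\<in>{0..<N}. A i k * v $ k) = (Am *\<^sub>v v) $ i" if "i < N" for i
      using v(1) that by (auto simp: Am_def mult_mat_vec_def scalar_prod_def intro!: sum.cong)
    then have "\<forall>i\<in>{0..<N}. v $ i = 0"
      using v(3) by - (rule inj, simp)
    then have "v = 0\<^sub>v N" using v(1) by (intro eq_vecI) auto
    with v(2) show False ..
  qed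
  then obtain Bm where Bm: "Bm \<in> carrier_mat N N" "Bm * Am = 1\<^sub>m N" "Am * Bm = 1\<^sub>m N"
    using det_non_zero_imp_unit[OF Am] by (auto simp: Units_def ring_mat_def)
  have "(\<Sum>l\<in>{0..<N}. A i l * Bm $$ (l, k)) = (Am * Bm) $$ (i, k)"
    and "(\<Sum>l\<in>{0..<N}. Bm $$ (i, l) * A l k) = (Bm * Am) $$ (i, k)"
    if "i < N" "k < N" for i k
    using that Bm(1) by (auto simp: Am_def times_mat_def scalar_prod_def intro!: sum.cong)
  then have "is_inverse_on {0..<N} A (\<lambda>i k. Bm $$ (i, k))"
    using Bm(2,3) by (simp add: is_inverse_on_def)
  then show ?thesis by blast
qed

lemma is_inverse_on_cong:
  assumes "\<And>a b. a \<in> I \<Longrightarrow> b \<in> I \<Longrightarrow> A a b = A' a b"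
    and "\<And>a b. a \<in> I \<Longrightarrow> b \<in> I \<Longrightarrow> B a b = B' a b"
  shows "is_inverse_on I A B \<longleftrightarrow> is_inverse_on I A' B'"
  using assms by (simp add: is_inverse_on_def cong: sum.cong)

lemma is_inverse_on_if_injective:
  assumes fin: "finite I"
    and inj: "\<And>v. \<forall>a\<in>I. (\<Sum>b\<in>I. A a b * v b) = 0 \<Longrightarrow> \<forall>a\<in>I. v a = 0"
  shows "\<exists>B. is_inverse_on I A B"
proof -
  define J where "J = {0..<card I}"
  obtain f where f: "bij_betw f J I"
    using ex_bij_betw_nat_finite[OF fin] unfolding J_def by blast
  define g where "g = inv_into J f"
  have f_J: "\<And>i. i \<in> J \<Longrightarrow> f i \<in> I" and g_I: "\<And>a. a \<in> I \<Longrightarrow> g a \<in> J"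
    using f bij_betw_inv_into[OF f] unfolding g_def by (auto simp: bij_betw_def)
  have f_g: "\<And>a. a \<in> I \<Longrightarrow> f (g a) = a" and g_f: "\<And>i. i \<in> J \<Longrightarrow> g (f i) = i"
    using f unfolding g_def by (auto simp: bij_betw_inv_into_right bij_betw_inv_into_left)
  have sum_I: "(\<Sum>b\<in>I. F b) = (\<Sum>k\<in>J. F (f k))" for F :: "_ \<Rightarrow> complex"
    by (rule sum.reindex_bij_betw[OF f, symmetric])
  have "\<exists>B'. is_inverse_on J (\<lambda>i k. A (f i) (f k)) B'"
    unfolding J_def
  proof (rule is_inverse_on_atLeastLessThan_if_injective, fold J_def)
    fix v assume v: "\<forall>i\<in>J. (\<Sum>k\<in>J. A (f i) (f k) * v k) = 0"
    have "\<forall>a\<in>I. (\<Sum>b\<in>I. A a b * v (g b)) = 0"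
      using v f_g g_I g_f by (simp add: sum_I cong: sum.cong) metis
    then have "\<forall>a\<in>I. v (g a) = 0" by (rule inj)
    then show "\<forall>i\<in>J. v i = 0" using f_J g_f by metis
  qed
  then obtain B' where "is_inverse_on J (\<lambda>i k. A (f i) (f k)) B'" ..
  then have "is_inverse_on I A (\<lambda>a c. B' (g a) (g c))"
    by (subst is_inverse_on_reindex[OF f]) (simp add: g_f cong: is_inverse_on_cong)
  then show ?thesis by blast
qed

definition monotone_matrix_on :: "'i set \<Rightarrow> ('i \<Rightarrow> 'i \<Rightarrow> real) \<Rightarrow> bool" where
  "monotone_matrix_on I R \<longleftrightarrow>
     (\<forall>w. (\<forall>a\<in>I. 0 \<le> (\<Sum>b\<in>I. R a b * w b)) \<longrightarrow> (\<forall>a\<in>I. 0 \<le> w a))"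

lemma monotone_matrix_onD:
  assumes "monotone_matrix_on I R" and "\<And>a. a \<in> I \<Longrightarrow> 0 \<le> (\<Sum>b\<in>I. R a b * w b)"
    and "a \<in> I"
  shows "0 \<le> w a"
  using assms unfolding monotone_matrix_on_def by blast

lemma monotone_matrix_on_kernel:
  assumes R: "monotone_matrix_on I R" and w: "\<And>a. a \<in> I \<Longrightarrow> (\<Sum>b\<in>I. R a b * w b) = 0"
    and a: "a \<in> I"
  shows "w a = 0"
proof -
  have "0 \<le> w a"
    by (rule monotone_matrix_onD[OF R _ a]) (simp add: w)
  moreover have "0 \<le> - w a"
    by (rule monotone_matrix_onD[OF R _ a]) (simp add: w sum_negf)
  ultimately show ?thesis by simp
qed

definition below_comparison_matrix_on ::
    "'i set \<Rightarrow> ('i \<Rightarrow> 'i \<Rightarrow> real) \<Rightarrow> ('i \<Rightarrow> 'i \<Rightarrow> complex) \<Rightarrow> bool" where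
  "below_comparison_matrix_on I R Q \<longleftrightarrow>
     (\<forall>a\<in>I. R a a \<le> cmod (Q a a)) \<and> (\<forall>a\<in>I. \<forall>b\<in>I. a \<noteq> b \<longrightarrow> R a b \<le> - cmod (Q a b))"

lemma comparison_row_le_norm:
  assumes fin: "finite I" and RQ: "below_comparison_matrix_on I R Q" and a: "a \<in> I"
  shows "(\<Sum>b\<in>I. R a b * cmod (v b)) \<le> cmod (\<Sum>b\<in>I. Q a b * v b)"
proof -
  let ?rest = "\<Sum>b\<in>I - {a}. Q a b * v b"
  have "cmod ?rest \<le> (\<Sum>b\<in>I - {a}. cmod (Q a b) * cmod (v b))"
    by (rule order_trans[OF norm_sum]) (simp add: norm_mult)
  also have "\<dots> \<le> (\<Sum>b\<in>I - {a}. - R a b * cmod (v b))"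
    using RQ a by (intro sum_mono mult_right_mono) (fastforce simp: below_comparison_matrix_on_def)+
  finally have off: "(\<Sum>b\<in>I - {a}. R a b * cmod (v b)) \<le> - cmod ?rest"
    by (simp add: sum_negf)
  have diag: "R a a * cmod (v a) \<le> cmod (Q a a * v a)"
    using RQ a by (simp add: below_comparison_matrix_on_def norm_mult mult_right_mono)
  have "(\<Sum>b\<in>I. R a b * cmod (v b)) = R a a * cmod (v a) + (\<Sum>b\<in>I - {a}. R a b * cmod (v b))"
    by (rule sum.remove[OF fin a])
  also have "\<dots> \<le> cmod (Q a a * v a) - cmod (- ?rest)"
    using diag off by simp
  also have "\<dots> \<le> cmod (Q a a * v a + ?rest)"
    using norm_diff_ineq[of "Q a a * v a" "?rest"] by simp
  also have "Q a a * v a + ?rest = (\<Sum>b\<in>I. Q a b * v b)"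
    by (rule sum.remove[OF fin a, symmetric])
  finally show ?thesis .
qed

lemma norm_le_if_comparison_solution:
  assumes fin: "finite I" and R: "monotone_matrix_on I R"
    and RQ: "below_comparison_matrix_on I R Q"
    and u: "\<And>a. a \<in> I \<Longrightarrow> cmod (\<Sum>b\<in>I. Q a b * u b) \<le> (\<Sum>b\<in>I. R a b * g b)"
    and a: "a \<in> I"
  shows "cmod (u a) \<le> g a"
proof -
  have "0 \<le> g a - cmod (u a)"
  proof (rule monotone_matrix_onD[OF R _ a])
    fix a' assume a': "a' \<in> I"
    show "0 \<le> (\<Sum>b\<in>I. R a' b * (g b - cmod (u b)))"
      using comparison_row_le_norm[OF fin RQ a', of u] u[OF a']
      by (simp add: right_diff_distrib sum_subtractf)
  qed
  then show ?thesis by simp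
qed

lemma is_inverse_on_if_comparison_monotone:
  assumes fin: "finite I" and R: "monotone_matrix_on I R"
    and RQ: "below_comparison_matrix_on I R Q"
  shows "\<exists>B. is_inverse_on I Q B"
proof (rule is_inverse_on_if_injective[OF fin])
  fix v assume "\<forall>a\<in>I. (\<Sum>b\<in>I. Q a b * v b) = 0"
  then have "cmod (v a) \<le> 0" if "a \<in> I" for a
    using norm_le_if_comparison_solution[OF fin R RQ _ that, of v "\<lambda>_. 0"] by simp
  then show "\<forall>a\<in>I. v a = 0" by simp
qed

definition block_bidiag :: "('a \<Rightarrow> 'a \<Rightarrow> real) \<Rightarrow> nat \<times> 'a \<Rightarrow> nat \<times> 'a \<Rightarrow> real" where
  "block_bidiag M = (\<lambda>(j, x) (j', x').
     (if j = j' then M x x' else 0) - (if j + 1 = j' \<and> x = x' then 1 else 0))"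

lemma block_bidiag_row:
  assumes fin: "finite \<Lambda>" and x: "x \<in> \<Lambda>" and j: "j \<le> n"
  shows "(\<Sum>b\<in>{0..n} \<times> \<Lambda>. block_bidiag M (j, x) b * w b)
       = (\<Sum>z\<in>\<Lambda>. M x z * w (j, z)) - (if j < n then w (Suc j, x) else 0)"
proof -
  have block: "(\<Sum>x'\<in>\<Lambda>. block_bidiag M (j, x) (j', x') * w (j', x'))
      = (if j' = j then \<Sum>z\<in>\<Lambda>. M x z * w (j, z) else 0) - (if j' = Suc j then w (j', x) else 0)"
    for j'
  proof (cases "j' = j")
    case False
    then have "block_bidiag M (j, x) (j', x') * w (j', x')
        = (if x = x' then if j' = Suc j then - w (j', x) else 0 else 0)" for x'
      by (auto simp: block_bidiag_def)
    then show ?thesis using False fin x by simp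
  qed (simp add: block_bidiag_def)
  have "(\<Sum>b\<in>{0..n} \<times> \<Lambda>. block_bidiag M (j, x) b * w b)
      = (\<Sum>j'\<in>{0..n}. \<Sum>x'\<in>\<Lambda>. block_bidiag M (j, x) (j', x') * w (j', x'))"
    by (simp add: sum.cartesian_product)
  also have "\<dots> = (\<Sum>j'\<in>{0..n}. (if j' = j then \<Sum>z\<in>\<Lambda>. M x z * w (j, z) else 0)
                        - (if j' = Suc j then w (j', x) else 0))"
    by (simp only: block)
  also have "\<dots> = (\<Sum>z\<in>\<Lambda>. M x z * w (j, z)) - (if j < n then w (Suc j, x) else 0)"
    using j by (simp add: sum_subtractf)
  finally show ?thesis .
qed

lemma monotone_block_bidiag:
  assumes fin: "finite \<Lambda>" and M: "monotone_matrix_on \<Lambda> M"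
  shows "monotone_matrix_on ({0..n} \<times> \<Lambda>) (block_bidiag M)"
  unfolding monotone_matrix_on_def
proof (intro allI impI)
  fix w assume H: "\<forall>a\<in>{0..n} \<times> \<Lambda>. 0 \<le> (\<Sum>b\<in>{0..n} \<times> \<Lambda>. block_bidiag M a b * w b)"
  have step: "\<forall>x\<in>\<Lambda>. 0 \<le> w (k, x)"
    if k: "k \<le> n" and next_block: "k < n \<Longrightarrow> \<forall>x\<in>\<Lambda>. 0 \<le> w (Suc k, x)" for k
  proof
    fix x assume x: "x \<in> \<Lambda>"
    show "0 \<le> w (k, x)"
    proof (rule monotone_matrix_onD[OF M, where w = "\<lambda>z. w (k, z)", OF _ x])
      fix y assume y: "y \<in> \<Lambda>"
      have "0 \<le> (\<Sum>z\<in>\<Lambda>. M y z * w (k, z)) - (if k < n then w (Suc k, y) else 0)"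
        using H[rule_format, of "(k, y)"] block_bidiag_row[OF fin y k, of M w] y k by simp
      moreover have "0 \<le> (if k < n then w (Suc k, y) else 0)"
        using next_block y by simp
      ultimately show "0 \<le> (\<Sum>z\<in>\<Lambda>. M y z * w (k, z))" by linarith
    qed
  qed
  have "\<forall>x\<in>\<Lambda>. 0 \<le> w (k, x)" if "k \<le> n" for k
    using that by (induction k rule: inc_induct) (simp_all add: step)
  then show "\<forall>a\<in>{0..n} \<times> \<Lambda>. 0 \<le> w a" by auto
qed

definition dominates_identity_on :: "'a set \<Rightarrow> ('a \<Rightarrow> 'a \<Rightarrow> real) \<Rightarrow> bool" where
  "dominates_identity_on \<Lambda> M \<longleftrightarrow>
     (\<forall>f. (\<Sum>x\<in>\<Lambda>. (f x)\<^sup>2) \<le> (\<Sum>x\<in>\<Lambda>. f x * (\<Sum>z\<in>\<Lambda>. M x z * f z)))"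

lemma sum_squares_le_if_dominates_identity:
  assumes M: "dominates_identity_on \<Lambda> M"
  shows "(\<Sum>x\<in>\<Lambda>. (f x)\<^sup>2) \<le> (\<Sum>x\<in>\<Lambda>. (\<Sum>z\<in>\<Lambda>. M x z * f z)\<^sup>2)"
proof -
  let ?Mf = "\<lambda>x. \<Sum>z\<in>\<Lambda>. M x z * f z"
  have "(\<Sum>x\<in>\<Lambda>. (f x)\<^sup>2) \<le> (\<Sum>x\<in>\<Lambda>. f x * ?Mf x)"
    using M by (simp add: dominates_identity_on_def)
  also have "\<dots> \<le> (\<Sum>x\<in>\<Lambda>. ((f x)\<^sup>2 + (?Mf x)\<^sup>2) / 2)"
  proof (rule sum_mono)
    show "f x * ?Mf x \<le> ((f x)\<^sup>2 + (?Mf x)\<^sup>2) / 2" for x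
      using sum_squares_bound[of "f x" "?Mf x"] by simp
  qed
  also have "\<dots> = ((\<Sum>x\<in>\<Lambda>. (f x)\<^sup>2) + (\<Sum>x\<in>\<Lambda>. (?Mf x)\<^sup>2)) / 2"
    by (simp only: sum_divide_distrib[symmetric] sum.distrib)
  finally show ?thesis by simp
qed

lemma monotone_if_dominates_identity:
  assumes fin: "finite \<Lambda>" and M: "dominates_identity_on \<Lambda> M"
    and off_diag: "\<And>x y. x \<in> \<Lambda> \<Longrightarrow> y \<in> \<Lambda> \<Longrightarrow> x \<noteq> y \<Longrightarrow> M x y \<le> 0"
  shows "monotone_matrix_on \<Lambda> M"
  unfolding monotone_matrix_on_def
proof (intro allI impI)
  fix f assume ge: "\<forall>x\<in>\<Lambda>. 0 \<le> (\<Sum>z\<in>\<Lambda>. M x z * f z)"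
  \<comment> \<open>Test against the negative part \<open>p\<close> of \<open>f\<close>: \<open>p\<close> and \<open>q\<close> have disjoint supports and \<open>M\<close>
    is nonpositive off the diagonal, so \<open>\<langle>p, M q\<rangle> \<le> 0\<close>.\<close>
  define p where "p x = max 0 (- f x)" for x
  define q where "q x = max 0 (f x)" for x
  have f_eq: "f = (\<lambda>x. q x - p x)" and pq: "p x * q x = 0" and "0 \<le> p x" "0 \<le> q x" for x
    by (auto simp: p_def q_def max_def)
  have "0 \<le> (\<Sum>x\<in>\<Lambda>. p x * (\<Sum>z\<in>\<Lambda>. M x z * f z))"
    using ge \<open>0 \<le> p _\<close> by (simp add: sum_nonneg)
  also have "\<dots> = (\<Sum>x\<in>\<Lambda>. \<Sum>z\<in>\<Lambda>. p x * M x z * q z) - (\<Sum>x\<in>\<Lambda>. p x * (\<Sum>z\<in>\<Lambda>. M x z * p z))"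
    by (subst f_eq) (simp add: sum_distrib_left right_diff_distrib sum_subtractf mult_ac)
  also have "\<dots> \<le> 0 - (\<Sum>x\<in>\<Lambda>. (p x)\<^sup>2)"
  proof (rule diff_mono)
    have "p x * M x z * q z \<le> 0" if "x \<in> \<Lambda>" "z \<in> \<Lambda>" for x z
      using off_diag[OF that] pq[of x] \<open>0 \<le> p x\<close> \<open>0 \<le> q z\<close>
      by (cases "x = z") (auto simp: mult_nonneg_nonpos mult_nonpos_nonneg)
    then show "(\<Sum>x\<in>\<Lambda>. \<Sum>z\<in>\<Lambda>. p x * M x z * q z) \<le> 0"
      by (simp add: sum_nonpos)
    show "(\<Sum>x\<in>\<Lambda>. (p x)\<^sup>2) \<le> (\<Sum>x\<in>\<Lambda>. p x * (\<Sum>z\<in>\<Lambda>. M x z * p z))"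
      using M by (simp add: dominates_identity_on_def)
  qed
  finally have "(\<Sum>x\<in>\<Lambda>. (p x)\<^sup>2) = 0"
    by (simp add: order_antisym sum_nonneg)
  then have "\<forall>x\<in>\<Lambda>. p x = 0"
    using fin by (simp add: sum_nonneg_eq_0_iff)
  then show "\<forall>x\<in>\<Lambda>. 0 \<le> f x"
    by (auto simp: p_def max_def split: if_splits)
qed

text \<open>For \<open>k \<le> j'\<close>, block \<open>k\<close> of the column \<open>(j', x')\<close> of the inverse is \<open>M^-(j'-k+1)\<close> applied to the
  unit vector at \<open>x'\<close>, and below \<open>j'\<close> the column vanishes; \<open>M^-1\<close> does not increase the \<open>\<ell>\<^sup>2\<close>-norm.\<close>
lemma block_bidiag_inverse_block_norm:
  assumes fin: "finite \<Lambda>" and M: "dominates_identity_on \<Lambda> M"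
    and c: "c = (j', x')" and j': "j' \<le> n" and x': "x' \<in> \<Lambda>"
    and g: "\<And>a. a \<in> {0..n} \<times> \<Lambda> \<Longrightarrow>
              (\<Sum>b\<in>{0..n} \<times> \<Lambda>. block_bidiag M a b * g b) = (if a = c then 1 else 0)"
    and k: "k \<le> n"
  shows "(\<Sum>x\<in>\<Lambda>. (g (k, x))\<^sup>2) \<le> (if k \<le> j' then 1 else 0)"
proof -
  define S where "S k = (\<Sum>x\<in>\<Lambda>. (g (k, x))\<^sup>2)" for k
  have step: "S k \<le> (if k \<le> j' then 1 else 0)"
    if k: "k \<le> n" and next_block: "k < n \<Longrightarrow> S (Suc k) \<le> (if Suc k \<le> j' then 1 else 0)" for k
  proof -
    define u where "u x = (if (k, x) = c then 1 else 0) + (if k < n then g (Suc k, x) else 0)" for x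
    have "S k \<le> (\<Sum>x\<in>\<Lambda>. (\<Sum>z\<in>\<Lambda>. M x z * g (k, z))\<^sup>2)"
      unfolding S_def by (rule sum_squares_le_if_dominates_identity[OF M])
    also have "\<dots> = (\<Sum>x\<in>\<Lambda>. (u x)\<^sup>2)"
      using g block_bidiag_row[OF fin _ k, of _ M g] k by (simp add: u_def)
    also have "\<dots> \<le> (if k \<le> j' then 1 else 0)"
    proof (cases "k < j'")
      case True
      then have "(\<Sum>x\<in>\<Lambda>. (u x)\<^sup>2) = S (Suc k)"
        using j' by (simp add: u_def S_def c)
      then show ?thesis using next_block True j' by simp
    next
      case False
      have "g (Suc k, x) = 0" if "k < n" "x \<in> \<Lambda>" for x
      proof -
        have "S (Suc k) \<le> 0" using next_block[OF \<open>k < n\<close>] False by simp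
        then have "S (Suc k) = 0" by (simp add: S_def order_antisym sum_nonneg)
        then show ?thesis using fin \<open>x \<in> \<Lambda>\<close> by (simp add: S_def sum_nonneg_eq_0_iff)
      qed
      then have "(\<Sum>x\<in>\<Lambda>. (u x)\<^sup>2) = (\<Sum>x\<in>\<Lambda>. if k = j' \<and> x = x' then 1 else 0)"
        by (intro sum.cong) (auto simp: u_def c)
      also have "\<dots> = (if k \<le> j' then 1 else 0)"
        using False fin x' by simp
      finally show ?thesis by simp
    qed
    finally show ?thesis .
  qed
  show ?thesis
    using k unfolding S_def[symmetric] by (induction k rule: inc_induct) (simp_all add: step)
qed

lemma block_bidiag_inverse_le_one:
  assumes fin: "finite \<Lambda>" and M: "dominates_identity_on \<Lambda> M"
    and c: "c \<in> {0..n} \<times> \<Lambda>"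
    and g: "\<And>a. a \<in> {0..n} \<times> \<Lambda> \<Longrightarrow>
              (\<Sum>b\<in>{0..n} \<times> \<Lambda>. block_bidiag M a b * g b) = (if a = c then 1 else 0)"
    and a: "a \<in> {0..n} \<times> \<Lambda>"
  shows "g a \<le> 1"
proof -
  obtain j' x' where c_eq: "c = (j', x')" and "j' \<le> n" "x' \<in> \<Lambda>"
    using c by auto
  obtain k x where a_eq: "a = (k, x)" and k: "k \<le> n" and x: "x \<in> \<Lambda>"
    using a by auto
  have "(g a)\<^sup>2 \<le> (\<Sum>x\<in>\<Lambda>. (g (k, x))\<^sup>2)"
    unfolding a_eq by (rule member_le_sum[OF x _ fin]) simp
  also have "\<dots> \<le> 1"
    using block_bidiag_inverse_block_norm[OF fin M c_eq \<open>j' \<le> n\<close> \<open>x' \<in> \<Lambda>\<close> g k]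
    by (simp split: if_splits)
  finally show ?thesis
    by (simp add: abs_square_le_1 abs_le_iff)
qed

definition id_plus_scaled :: "real \<Rightarrow> ('a \<Rightarrow> 'a \<Rightarrow> complex) \<Rightarrow> 'a \<Rightarrow> 'a \<Rightarrow> real" where
  "id_plus_scaled \<epsilon> E x y = (if x = y then 1 else 0) + \<epsilon> * Re (E x y)"

locale psd_Z_operator =
  fixes \<Lambda> :: "site set" and E :: "site \<Rightarrow> site \<Rightarrow> complex"
  assumes finite: "finite \<Lambda>"
    and hermitian: "hermitian_on \<Lambda> E"
    and pos_semidef: "pos_semidef_on \<Lambda> E"
    and off_diag: "\<And>x y. x \<in> \<Lambda> \<Longrightarrow> y \<in> \<Lambda> \<Longrightarrow> x \<noteq> y \<Longrightarrow> Im (E x y) = 0 \<and> Re (E x y) \<le> 0"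
begin

lemma Im_eq_0:
  assumes "x \<in> \<Lambda>" and "y \<in> \<Lambda>"
  shows "Im (E x y) = 0"
proof (cases "x = y")
  case True
  then have "E x y = cnj (E x y)"
    using hermitian assms unfolding hermitian_on_def by blast
  then show ?thesis
    by (metis cnj.sel(2) neg_equal_zero)
qed (use off_diag assms in blast)

lemma Re_quadratic_form_nonneg: "0 \<le> (\<Sum>x\<in>\<Lambda>. \<Sum>y\<in>\<Lambda>. f x * Re (E x y) * f y)"
proof -
  have "0 \<le> Re (\<Sum>x\<in>\<Lambda>. \<Sum>y\<in>\<Lambda>. cnj (complex_of_real (f x)) * E x y * complex_of_real (f y))"
    using pos_semidef unfolding pos_semidef_on_def by (rule allE)
  then show ?thesis
    by (simp add: mult.commute)
qed

lemma dominates_identity_id_plus_scaled: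
  assumes "0 \<le> \<epsilon>"
  shows "dominates_identity_on \<Lambda> (id_plus_scaled \<epsilon> E)"
  unfolding dominates_identity_on_def
proof
  fix f :: "site \<Rightarrow> real"
  have "(\<Sum>z\<in>\<Lambda>. id_plus_scaled \<epsilon> E x z * f z) = f x + \<epsilon> * (\<Sum>z\<in>\<Lambda>. Re (E x z) * f z)"
    if "x \<in> \<Lambda>" for x
  proof -
    have "(\<Sum>z\<in>\<Lambda>. id_plus_scaled \<epsilon> E x z * f z)
        = (\<Sum>z\<in>\<Lambda>. (if x = z then f z else 0) + \<epsilon> * (Re (E x z) * f z))"
      by (intro sum.cong) (auto simp: id_plus_scaled_def algebra_simps)
    then show ?thesis
      using that finite by (simp add: sum.distrib sum_distrib_left)
  qed
  then have "(\<Sum>x\<in>\<Lambda>. f x * (\<Sum>z\<in>\<Lambda>. id_plus_scaled \<epsilon> E x z * f z))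
      = (\<Sum>x\<in>\<Lambda>. (f x)\<^sup>2) + \<epsilon> * (\<Sum>x\<in>\<Lambda>. \<Sum>z\<in>\<Lambda>. f x * Re (E x z) * f z)"
    by (simp add: distrib_left sum.distrib sum_distrib_left power2_eq_square mult_ac)
  moreover have "0 \<le> \<epsilon> * (\<Sum>x\<in>\<Lambda>. \<Sum>z\<in>\<Lambda>. f x * Re (E x z) * f z)"
    using assms Re_quadratic_form_nonneg by simp
  ultimately show "(\<Sum>x\<in>\<Lambda>. (f x)\<^sup>2) \<le> (\<Sum>x\<in>\<Lambda>. f x * (\<Sum>z\<in>\<Lambda>. id_plus_scaled \<epsilon> E x z * f z))"
    by linarith
qed

lemma monotone_id_plus_scaled:
  assumes "0 \<le> \<epsilon>"
  shows "monotone_matrix_on \<Lambda> (id_plus_scaled \<epsilon> E)"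
  using finite dominates_identity_id_plus_scaled[OF assms]
proof (rule monotone_if_dominates_identity)
  show "id_plus_scaled \<epsilon> E x y \<le> 0" if "x \<in> \<Lambda>" "y \<in> \<Lambda>" "x \<noteq> y" for x y
    using off_diag[OF that] that assms by (simp add: id_plus_scaled_def mult_nonneg_nonpos)
qed

abbreviation Q4_comparison :: "real \<Rightarrow> nat \<Rightarrow> nat \<times> site \<Rightarrow> nat \<times> site \<Rightarrow> real" where
  "Q4_comparison \<beta> n \<equiv> block_bidiag (id_plus_scaled (\<beta> / real n) E)"

lemma Q4_below_comparison:
  assumes "0 \<le> \<beta>"
  shows "below_comparison_matrix_on (idx n \<Lambda>) (Q4_comparison \<beta> n) (Q4 \<beta> n E h)"
  unfolding below_comparison_matrix_on_def
proof (intro conjI ballI impI)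
  fix a assume "a \<in> idx n \<Lambda>"
  have "Q4_comparison \<beta> n a a = Re (Q4 \<beta> n E h a a)"
    by (cases a) (simp add: Q4_def block_bidiag_def id_plus_scaled_def Let_def)
  then show "Q4_comparison \<beta> n a a \<le> cmod (Q4 \<beta> n E h a a)"
    using complex_Re_le_cmod by simp
next
  fix a b assume "a \<in> idx n \<Lambda>" "b \<in> idx n \<Lambda>" "a \<noteq> b"
  then obtain j x j' x' where ab: "a = (j, x)" "b = (j', x')" and "x \<in> \<Lambda>" "x' \<in> \<Lambda>"
    by (auto simp: idx_def)
  show "Q4_comparison \<beta> n a b \<le> - cmod (Q4 \<beta> n E h a b)"
  proof (cases "j = j'")
    case True
    with ab \<open>a \<noteq> b\<close> have "x \<noteq> x'" by simp
    have "cmod (Q4 \<beta> n E h a b) = \<beta> / real n * \<bar>Re (E x x')\<bar>"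
      using True \<open>x \<noteq> x'\<close> ab Im_eq_0[OF \<open>x \<in> \<Lambda>\<close> \<open>x' \<in> \<Lambda>\<close>] assms
      by (simp add: Q4_def norm_mult cmod_eq_Re abs_mult)
    then show ?thesis
      using True \<open>x \<noteq> x'\<close> ab off_diag[OF \<open>x \<in> \<Lambda>\<close> \<open>x' \<in> \<Lambda>\<close>] assms
      by (simp add: block_bidiag_def id_plus_scaled_def)
  qed (use ab in \<open>simp add: Q4_def block_bidiag_def\<close>)
qed

lemma Q4_zero_eq_comparison:
  assumes "a \<in> idx n \<Lambda>" and "b \<in> idx n \<Lambda>"
  shows "Q4 \<beta> n E (\<lambda>_ _. 0) a b = complex_of_real (Q4_comparison \<beta> n a b)"
proof -
  obtain j x j' x' where ab: "a = (j, x)" "b = (j', x')" and "x \<in> \<Lambda>" "x' \<in> \<Lambda>"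
    using assms by (auto simp: idx_def)
  then have "E x x' = complex_of_real (Re (E x x'))"
    using Im_eq_0 by (simp add: complex_eq_iff)
  then show ?thesis
    using ab by (simp add: Q4_def block_bidiag_def id_plus_scaled_def Let_def)
qed

lemma monotone_Q4_comparison:
  assumes "0 \<le> \<beta>"
  shows "monotone_matrix_on (idx n \<Lambda>) (Q4_comparison \<beta> n)"
  unfolding idx_def using finite monotone_id_plus_scaled assms
  by (intro monotone_block_bidiag) simp_all

lemma C4_is_inverse:
  assumes "0 \<le> \<beta>"
  shows "is_inverse_on (idx n \<Lambda>) (Q4 \<beta> n E h) (C4 \<beta> n \<Lambda> E h)"
proof -
  have "\<exists>B. is_inverse_on (idx n \<Lambda>) (Q4 \<beta> n E h) B"
    using finite monotone_Q4_comparison[OF assms] Q4_below_comparison[OF assms]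
    by (intro is_inverse_on_if_comparison_monotone) (simp_all add: idx_def)
  then show ?thesis
    unfolding C4_def inverse_on_def by (rule someI_ex)
qed

lemma C4_zero_column:
  assumes \<beta>: "0 \<le> \<beta>" and a: "a \<in> idx n \<Lambda>" and c: "c \<in> idx n \<Lambda>"
  shows "(\<Sum>b\<in>idx n \<Lambda>. Q4_comparison \<beta> n a b * Re (C4 \<beta> n \<Lambda> E (\<lambda>_ _. 0) b c))
           = (if a = c then 1 else 0)"
    and "(\<Sum>b\<in>idx n \<Lambda>. Q4_comparison \<beta> n a b * Im (C4 \<beta> n \<Lambda> E (\<lambda>_ _. 0) b c)) = 0"
proof -
  have "(\<Sum>b\<in>idx n \<Lambda>. complex_of_real (Q4_comparison \<beta> n a b) * C4 \<beta> n \<Lambda> E (\<lambda>_ _. 0) b c)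
      = (\<Sum>b\<in>idx n \<Lambda>. Q4 \<beta> n E (\<lambda>_ _. 0) a b * C4 \<beta> n \<Lambda> E (\<lambda>_ _. 0) b c)"
    using Q4_zero_eq_comparison[OF a] by (intro sum.cong) simp_all
  also have "\<dots> = (if a = c then 1 else 0)"
    using C4_is_inverse[OF \<beta>] a c unfolding is_inverse_on_def by blast
  finally have col: "(\<Sum>b\<in>idx n \<Lambda>. complex_of_real (Q4_comparison \<beta> n a b) * C4 \<beta> n \<Lambda> E (\<lambda>_ _. 0) b c)
      = (if a = c then 1 else 0)" .
  from arg_cong[OF col, of Re]
  show "(\<Sum>b\<in>idx n \<Lambda>. Q4_comparison \<beta> n a b * Re (C4 \<beta> n \<Lambda> E (\<lambda>_ _. 0) b c))
           = (if a = c then 1 else 0)"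
    by (cases "a = c") simp_all
  from arg_cong[OF col, of Im]
  show "(\<Sum>b\<in>idx n \<Lambda>. Q4_comparison \<beta> n a b * Im (C4 \<beta> n \<Lambda> E (\<lambda>_ _. 0) b c)) = 0"
    by (cases "a = c") simp_all
qed

lemma Im_C4_zero:
  assumes \<beta>: "0 \<le> \<beta>" and a: "a \<in> idx n \<Lambda>" and c: "c \<in> idx n \<Lambda>"
  shows "Im (C4 \<beta> n \<Lambda> E (\<lambda>_ _. 0) a c) = 0"
  by (rule monotone_matrix_on_kernel[OF monotone_Q4_comparison[OF \<beta>] C4_zero_column(2)[OF \<beta> _ c] a])

lemma norm_C4_le_C4_zero:
  assumes \<beta>: "0 \<le> \<beta>" and a: "a \<in> idx n \<Lambda>" and c: "c \<in> idx n \<Lambda>"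
  shows "cmod (C4 \<beta> n \<Lambda> E h a c) \<le> Re (C4 \<beta> n \<Lambda> E (\<lambda>_ _. 0) a c)"
proof (rule norm_le_if_comparison_solution[OF _ monotone_Q4_comparison[OF \<beta>] Q4_below_comparison[OF \<beta>] _ a])
  show "finite (idx n \<Lambda>)" using finite by (simp add: idx_def)
  fix a' assume a': "a' \<in> idx n \<Lambda>"
  have "(\<Sum>b\<in>idx n \<Lambda>. Q4 \<beta> n E h a' b * C4 \<beta> n \<Lambda> E h b c) = (if a' = c then 1 else 0)"
    using C4_is_inverse[OF \<beta>] a' c unfolding is_inverse_on_def by blast
  then show "cmod (\<Sum>b\<in>idx n \<Lambda>. Q4 \<beta> n E h a' b * C4 \<beta> n \<Lambda> E h b c)
      \<le> (\<Sum>b\<in>idx n \<Lambda>. Q4_comparison \<beta> n a' b * Re (C4 \<beta> n \<Lambda> E (\<lambda>_ _. 0) b c))"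
    using C4_zero_column(1)[OF \<beta> a' c] by simp
qed

lemma Re_C4_zero_le_one:
  assumes \<beta>: "0 \<le> \<beta>" and a: "a \<in> idx n \<Lambda>" and c: "c \<in> idx n \<Lambda>"
  shows "Re (C4 \<beta> n \<Lambda> E (\<lambda>_ _. 0) a c) \<le> 1"
proof (rule block_bidiag_inverse_le_one[where g = "\<lambda>b. Re (C4 \<beta> n \<Lambda> E (\<lambda>_ _. 0) b c)" and c = c])
  show "finite \<Lambda>" by (rule finite)
  show "dominates_identity_on \<Lambda> (id_plus_scaled (\<beta> / real n) E)"
    using \<beta> by (simp add: dominates_identity_id_plus_scaled)
  show "c \<in> {0..n} \<times> \<Lambda>" and "a \<in> {0..n} \<times> \<Lambda>"
    using a c by (simp_all add: idx_def)
  show "(\<Sum>b\<in>{0..n} \<times> \<Lambda>. Q4_comparison \<beta> n a' b * Re (C4 \<beta> n \<Lambda> E (\<lambda>_ _. 0) b c))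
      = (if a' = c then 1 else 0)" if "a' \<in> {0..n} \<times> \<Lambda>" for a'
    using C4_zero_column(1)[OF \<beta> _ c, of a'] that by (simp add: idx_def)
qed

end

lemma finite_torus: "finite (torus d L)"
proof -
  have "finite {x. \<forall>i. (i \<in> {..<d} \<longrightarrow> x i \<in> {0..<L}) \<and> (i \<notin> {..<d} \<longrightarrow> x i = 0)}"
    by (rule finite_set_of_finite_funs) simp_all
  also have "{x. \<forall>i. (i \<in> {..<d} \<longrightarrow> x i \<in> {0..<L}) \<and> (i \<notin> {..<d} \<longrightarrow> x i = 0)} = torus d L"
    unfolding torus_def by (simp add: not_less all_conj_distrib)
  finally show ?thesis .
qed

theorem lemma6p6:
  fixes \<beta> :: real and d :: nat and L :: int and E :: "site \<Rightarrow> site \<Rightarrow> complex"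
  assumes "\<beta> > 0" and "L \<ge> 1"
    and "hermitian_on (torus d L) E"
    and "pos_semidef_on (torus d L) E"
    and "\<forall>x\<in>torus d L. \<forall>y\<in>torus d L. x \<noteq> y \<longrightarrow> Im (E x y) = 0 \<and> Re (E x y) \<le> 0"
  shows "(\<forall>n \<ge> 1. \<forall>h :: nat \<Rightarrow> site \<Rightarrow> real.
            is_inverse_on (idx n (torus d L)) (Q4 \<beta> n E h) (C4 \<beta> n (torus d L) E h) \<and>
            (\<forall>j\<in>{0..n}. \<forall>j'\<in>{0..n}. \<forall>x\<in>torus d L. \<forall>x'\<in>torus d L.
               Im (C4 \<beta> n (torus d L) E (\<lambda>_ _. 0) (j, x) (j', x')) = 0 \<and>
               cmod (C4 \<beta> n (torus d L) E h (j, x) (j', x'))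
                 \<le> Re (C4 \<beta> n (torus d L) E (\<lambda>_ _. 0) (j, x) (j', x'))))
       \<and> (\<exists>M. \<forall>n \<ge> 1. \<forall>j\<in>{0..n}. \<forall>j'\<in>{0..n}. \<forall>x\<in>torus d L. \<forall>x'\<in>torus d L.
               Re (C4 \<beta> n (torus d L) E (\<lambda>_ _. 0) (j, x) (j', x')) \<le> M)"
proof -
  interpret psd_Z_operator "torus d L" E
    using finite_torus assms(3-5) by unfold_locales auto
  have \<beta>: "0 \<le> \<beta>" using assms(1) by simp
  have idx: "(j, x) \<in> idx n (torus d L)" if "j \<in> {0..n}" and "x \<in> torus d L" for j x n
    using that by (simp add: idx_def)
  show ?thesis
    by (intro conjI allI impI ballI exI[of _ 1])
      (simp_all add: \<beta> idx C4_is_inverse Im_C4_zero norm_C4_le_C4_zero Re_C4_zero_le_one)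
qed

end
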